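(* Let $p$ be a prime, let $B$ be a nontrivial finite $p$-group and let $r\ge2$ be an integer. Then there are sequences $(G_n)$, $(H_n)$ of finite $p$-groups with $|G_n|\to\infty$, $|H_n|\to\infty$ and $a(G_n\wr H_n)\to p^r a(B)$.
   Context: For a finite group $G$, the average order is $a(G)=\frac{1}{|G|}\sum_{g\in G}\mathrm{order}(g)$. For groups $A,B$, let $K=\prod_{b\in B}A$, on which $B$ acts by $x\cdot(\alpha_b)_b=(\alpha_{x^{-1}b})_b$ for $x\in B$; the wreath product $A\wr B$ is the semidirect product $K\rtimes B$ for this action. *)

theory Defs
  imports Complex_Main "HOL-Algebra.Algebra"
begin

definition avg_order :: "('a, 'b) monoid_scheme \<Rightarrow> real" where
  "avg_order G = (\<Sum>g\<in>carrier G. real (group.ord G g)) / real (order G)"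

definition finite_p_group :: "nat \<Rightarrow> ('a, 'b) monoid_scheme \<Rightarrow> bool" where
  "finite_p_group p G \<longleftrightarrow> group G \<and> finite (carrier G) \<and> (\<exists>k. order G = p ^ k)"

text \<open>Wreath product A wr B = (prod over b in B of A) semidirect B, where x in B acts on
  K by (x . alpha)_b = alpha_(x^-1 b). Elements of K are extensional functions on carrier B.\<close>
definition wreath :: "('a, 'c) monoid_scheme \<Rightarrow> ('b, 'd) monoid_scheme \<Rightarrow> (('b \<Rightarrow> 'a) \<times> 'b) monoid" where
  "wreath A B = \<lparr> carrier = (carrier B \<rightarrow>\<^sub>E carrier A) \<times> carrier B,
     monoid.mult = (\<lambda>(f, x) (g, y). ((\<lambda>b\<in>carrier B. f b \<otimes>\<^bsub>A\<^esub> g (inv\<^bsub>B\<^esub> x \<otimes>\<^bsub>B\<^esub> b)), x \<otimes>\<^bsub>B\<^esub> y)),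
     monoid.one = ((\<lambda>b\<in>carrier B. \<one>\<^bsub>A\<^esub>), \<one>\<^bsub>B\<^esub>) \<rparr>"

end

theory Submission
  imports Defs
begin

text \<open>
  If every element of A has order dividing e, then in A wr H the power (f, x)^(ord x) lies in
  the base group, so the order of (f, x) divides e \<cdot> ord x; it equals e \<cdot> ord x as soon as the
  1-coordinate of (f, x)^(ord x), an ordered product of the values of f along the coset of x,
  has order exactly e. For fixed x this coordinate is uniformly distributed over A as f runs
  through the base group, hence \<delta> e a(H) \<le> a(A wr H) \<le> e a(H), where \<delta> is the proportion of
  elements of order e in A. For A = (\<int>/q)^n one has \<delta> \<ge> 1 - ((q - 1)/q)^n \<rightarrow> 1. Applying this
  first to A = (\<int>/p^(r-1))^n, H = B and then to A = (\<int>/p)^n and H the resulting wreath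
  product gives the limit p \<cdot> p^(r-1) a(B).
\<close>

section \<open>Element orders in a wreath product\<close>

lemma carrier_wreath: "carrier (wreath A H) = (carrier H \<rightarrow>\<^sub>E carrier A) \<times> carrier H"
  by (simp add: wreath_def)

lemma mult_wreath: "(f, x) \<otimes>\<^bsub>wreath A H\<^esub> (g, y) =
   ((\<lambda>b\<in>carrier H. f b \<otimes>\<^bsub>A\<^esub> g (inv\<^bsub>H\<^esub> x \<otimes>\<^bsub>H\<^esub> b)), x \<otimes>\<^bsub>H\<^esub> y)"
  by (simp add: wreath_def)

lemma one_wreath: "\<one>\<^bsub>wreath A H\<^esub> = ((\<lambda>b\<in>carrier H. \<one>\<^bsub>A\<^esub>), \<one>\<^bsub>H\<^esub>)"
  by (simp add: wreath_def)

lemma order_wreath: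
  "finite (carrier H) \<Longrightarrow> order (wreath A H) = order A ^ order H * order H"
  by (simp add: order_def carrier_wreath card_cartesian_product card_PiE)

primrec wreath_pow_base ::
  "('a, 'c) monoid_scheme \<Rightarrow> ('b, 'd) monoid_scheme \<Rightarrow> ('b \<Rightarrow> 'a) \<Rightarrow> 'b \<Rightarrow> nat \<Rightarrow> 'b \<Rightarrow> 'a"
where
  "wreath_pow_base A H f x 0 = (\<lambda>b\<in>carrier H. \<one>\<^bsub>A\<^esub>)"
| "wreath_pow_base A H f x (Suc k) =
     (\<lambda>b\<in>carrier H. wreath_pow_base A H f x k b \<otimes>\<^bsub>A\<^esub> f (inv\<^bsub>H\<^esub> (x [^]\<^bsub>H\<^esub> k) \<otimes>\<^bsub>H\<^esub> b))"

primrec inv_orbit_prod ::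
  "('a, 'c) monoid_scheme \<Rightarrow> ('b, 'd) monoid_scheme \<Rightarrow> ('b \<Rightarrow> 'a) \<Rightarrow> 'b \<Rightarrow> nat \<Rightarrow> 'a"
where
  "inv_orbit_prod A H f x 0 = \<one>\<^bsub>A\<^esub>"
| "inv_orbit_prod A H f x (Suc k) =
     inv_orbit_prod A H f x k \<otimes>\<^bsub>A\<^esub> f (inv\<^bsub>H\<^esub> (x [^]\<^bsub>H\<^esub> Suc k))"

locale wreath_product = A: group A + H: group H
  for A :: "('a, 'c) monoid_scheme" and H :: "('b, 'd) monoid_scheme"
begin

lemma group_wreath: "group (wreath A H)"
proof (rule groupI)
  fix u v assume "u \<in> carrier (wreath A H)" "v \<in> carrier (wreath A H)"
  then show "u \<otimes>\<^bsub>wreath A H\<^esub> v \<in> carrier (wreath A H)"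
    by (cases u, cases v) (auto simp: carrier_wreath mult_wreath PiE_iff)
next
  show "\<one>\<^bsub>wreath A H\<^esub> \<in> carrier (wreath A H)"
    by (auto simp: carrier_wreath one_wreath)
next
  fix u v w
  assume "u \<in> carrier (wreath A H)" "v \<in> carrier (wreath A H)" "w \<in> carrier (wreath A H)"
  then show "u \<otimes>\<^bsub>wreath A H\<^esub> v \<otimes>\<^bsub>wreath A H\<^esub> w = u \<otimes>\<^bsub>wreath A H\<^esub> (v \<otimes>\<^bsub>wreath A H\<^esub> w)"
    by (cases u, cases v, cases w)
      (auto simp: carrier_wreath mult_wreath PiE_iff H.inv_mult_group A.m_assoc H.m_assoc
        intro!: restrict_ext)
next
  fix u assume "u \<in> carrier (wreath A H)"
  then show "\<one>\<^bsub>wreath A H\<^esub> \<otimes>\<^bsub>wreath A H\<^esub> u = u"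
    by (cases u) (auto simp: carrier_wreath mult_wreath one_wreath PiE_iff
        intro!: extensionalityI[where A = "carrier H"])
next
  fix u assume "u \<in> carrier (wreath A H)"
  then obtain f x where u: "u = (f, x)" and f: "f \<in> carrier H \<rightarrow>\<^sub>E carrier A" and x: "x \<in> carrier H"
    by (auto simp: carrier_wreath)
  let ?v = "((\<lambda>b\<in>carrier H. inv\<^bsub>A\<^esub> f (x \<otimes>\<^bsub>H\<^esub> b)), inv\<^bsub>H\<^esub> x)"
  have "?v \<in> carrier (wreath A H)"
    using f x by (auto simp: carrier_wreath PiE_iff)
  moreover have "?v \<otimes>\<^bsub>wreath A H\<^esub> u = \<one>\<^bsub>wreath A H\<^esub>"
    using f x by (auto simp: u mult_wreath one_wreath PiE_iff H.m_assoc[symmetric] intro!: restrict_ext)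
  ultimately show "\<exists>v\<in>carrier (wreath A H). v \<otimes>\<^bsub>wreath A H\<^esub> u = \<one>\<^bsub>wreath A H\<^esub>"
    by blast
qed

lemma wreath_pow: "(f, x) [^]\<^bsub>wreath A H\<^esub> k = (wreath_pow_base A H f x k, x [^]\<^bsub>H\<^esub> k)"
  by (induction k) (simp_all add: one_wreath mult_wreath, simp_all only: restrict_def)

lemma wreath_pow_base_closed:
  "f \<in> carrier H \<rightarrow>\<^sub>E carrier A \<Longrightarrow> x \<in> carrier H \<Longrightarrow>
    wreath_pow_base A H f x k \<in> carrier H \<rightarrow>\<^sub>E carrier A"
  by (induction k) (auto simp: PiE_iff)

lemma wreath_pow_in_base:
  assumes "g \<in> carrier H \<rightarrow>\<^sub>E carrier A"
  shows "(g, \<one>\<^bsub>H\<^esub>) [^]\<^bsub>wreath A H\<^esub> (j::nat) = ((\<lambda>b\<in>carrier H. g b [^]\<^bsub>A\<^esub> j), \<one>\<^bsub>H\<^esub>)"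
  using assms by (induction j) (auto simp: one_wreath mult_wreath PiE_iff intro!: restrict_ext)

lemma wreath_pow_ord_mult:
  assumes f: "f \<in> carrier H \<rightarrow>\<^sub>E carrier A" and x: "x \<in> carrier H"
  shows "(f, x) [^]\<^bsub>wreath A H\<^esub> (H.ord x * j) =
    ((\<lambda>b\<in>carrier H. wreath_pow_base A H f x (H.ord x) b [^]\<^bsub>A\<^esub> j), \<one>\<^bsub>H\<^esub>)"
proof -
  interpret W: group "wreath A H" by (rule group_wreath)
  have "(f, x) \<in> carrier (wreath A H)"
    using f x by (simp add: carrier_wreath)
  then have "(f, x) [^]\<^bsub>wreath A H\<^esub> (H.ord x * j) = ((f, x) [^]\<^bsub>wreath A H\<^esub> H.ord x) [^]\<^bsub>wreath A H\<^esub> j"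
    by (simp add: W.nat_pow_pow)
  also have "\<dots> = (wreath_pow_base A H f x (H.ord x), \<one>\<^bsub>H\<^esub>) [^]\<^bsub>wreath A H\<^esub> j"
    using x by (simp add: wreath_pow)
  finally show ?thesis
    using wreath_pow_in_base[OF wreath_pow_base_closed[OF f x]] by simp
qed

lemma wreath_ord_dvd:
  assumes f: "f \<in> carrier H \<rightarrow>\<^sub>E carrier A" and x: "x \<in> carrier H"
    and exponent: "\<And>a. a \<in> carrier A \<Longrightarrow> A.ord a dvd e"
  shows "group.ord (wreath A H) (f, x) dvd H.ord x * e"
proof -
  interpret W: group "wreath A H" by (rule group_wreath)
  have "(f, x) [^]\<^bsub>wreath A H\<^esub> (H.ord x * e) = \<one>\<^bsub>wreath A H\<^esub>"
    using wreath_pow_base_closed[OF f x] exponent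
    by (auto simp: wreath_pow_ord_mult[OF f x] one_wreath PiE_iff A.pow_eq_id intro!: restrict_ext)
  then show ?thesis
    using f x W.pow_eq_id by (simp add: carrier_wreath)
qed

lemma dvd_wreath_ord:
  assumes f: "f \<in> carrier H \<rightarrow>\<^sub>E carrier A" and x: "x \<in> carrier H"
  shows "H.ord x * A.ord (wreath_pow_base A H f x (H.ord x) \<one>\<^bsub>H\<^esub>) dvd group.ord (wreath A H) (f, x)"
proof -
  interpret W: group "wreath A H" by (rule group_wreath)
  let ?c = "wreath_pow_base A H f x (H.ord x) \<one>\<^bsub>H\<^esub>"
  have fx: "(f, x) \<in> carrier (wreath A H)"
    using f x by (simp add: carrier_wreath)
  have "x [^]\<^bsub>H\<^esub> W.ord (f, x) = \<one>\<^bsub>H\<^esub>"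
    using W.pow_ord_eq_1[OF fx] by (simp add: wreath_pow one_wreath)
  then obtain j where j: "W.ord (f, x) = H.ord x * j"
    using x H.pow_eq_id by blast
  have "(f, x) [^]\<^bsub>wreath A H\<^esub> (H.ord x * j) = \<one>\<^bsub>wreath A H\<^esub>"
    using W.pow_ord_eq_1[OF fx] by (simp add: j)
  then have "?c [^]\<^bsub>A\<^esub> j = \<one>\<^bsub>A\<^esub>"
    by (auto simp: wreath_pow_ord_mult[OF f x] one_wreath dest!: fun_cong[of _ _ "\<one>\<^bsub>H\<^esub>"])
  then have "A.ord ?c dvd j"
    using wreath_pow_base_closed[OF f x] A.pow_eq_id by (auto simp: PiE_iff)
  then show ?thesis
    by (simp add: j)
qed

lemma inv_orbit_prod_closed:
  "f \<in> carrier H \<rightarrow>\<^sub>E carrier A \<Longrightarrow> x \<in> carrier H \<Longrightarrow> inv_orbit_prod A H f x k \<in> carrier A"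
  by (induction k) (auto simp: PiE_iff)

lemma inv_orbit_prod_cong:
  "(\<And>i. 0 < i \<Longrightarrow> i \<le> k \<Longrightarrow> f (inv\<^bsub>H\<^esub> (x [^]\<^bsub>H\<^esub> i)) = g (inv\<^bsub>H\<^esub> (x [^]\<^bsub>H\<^esub> i)))
    \<Longrightarrow> inv_orbit_prod A H f x k = inv_orbit_prod A H g x k"
proof (induction k)
  case (Suc k)
  then show ?case
    by (metis inv_orbit_prod.simps(2) le_SucI order.refl zero_less_Suc)
qed simp

lemma wreath_pow_base_Suc_one:
  assumes f: "f \<in> carrier H \<rightarrow>\<^sub>E carrier A" and x: "x \<in> carrier H"
  shows "wreath_pow_base A H f x (Suc k) \<one>\<^bsub>H\<^esub> = f \<one>\<^bsub>H\<^esub> \<otimes>\<^bsub>A\<^esub> inv_orbit_prod A H f x k"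
proof (induction k)
  case 0
  then show ?case using f by (auto simp: PiE_iff)
next
  case (Suc k)
  have "wreath_pow_base A H f x (Suc (Suc k)) \<one>\<^bsub>H\<^esub>
      = wreath_pow_base A H f x (Suc k) \<one>\<^bsub>H\<^esub> \<otimes>\<^bsub>A\<^esub> f (inv\<^bsub>H\<^esub> (x [^]\<^bsub>H\<^esub> Suc k))"
    using x by (simp only: wreath_pow_base.simps(2)[of _ _ _ _ "Suc k"]) simp
  then show ?case
    using Suc f x inv_orbit_prod_closed[OF f x] by (simp add: A.m_assoc PiE_iff)
qed

end

section \<open>Average order of a wreath product\<close>

lemma card_PiE_value_in:
  assumes "finite I" "i \<in> I" "S \<subseteq> A"
  shows "card {g \<in> I \<rightarrow>\<^sub>E A. g i \<in> S} = card S * card A ^ (card I - 1)"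
proof -
  have "{g \<in> I \<rightarrow>\<^sub>E A. g i \<in> S} = (\<Pi>\<^sub>E j\<in>I. if j = i then S else A)"
    using assms(2,3) unfolding PiE_def Pi_def by auto
  then show ?thesis
    using assms(1,2) by (simp add: card_PiE prod.remove[of I i])
qed

definition ord_fraction :: "('a, 'b) monoid_scheme \<Rightarrow> nat \<Rightarrow> real" where
  "ord_fraction G e = real (card {a \<in> carrier G. group.ord G a = e}) / real (order G)"

lemma ord_fraction_le_1: "ord_fraction G e \<le> 1"
proof (cases "finite (carrier G)")
  case True
  then have "card {a \<in> carrier G. group.ord G a = e} \<le> order G"
    unfolding order_def by (intro card_mono) auto
  then show ?thesis
    by (auto simp: ord_fraction_def divide_le_eq_1)
qed (simp add: ord_fraction_def order_def)

locale finite_wreath_product = wreath_product +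
  assumes finite_A: "finite (carrier A)" and finite_H: "finite (carrier H)"
begin

lemma card_wreath_pow_base_in:
  assumes x: "x \<in> carrier H" and S: "S \<subseteq> carrier A"
  shows "card {f \<in> carrier H \<rightarrow>\<^sub>E carrier A. wreath_pow_base A H f x (H.ord x) \<one>\<^bsub>H\<^esub> \<in> S}
    = card S * card (carrier A) ^ (card (carrier H) - 1)"
proof -
  let ?K = "carrier H \<rightarrow>\<^sub>E carrier A"
  define m where "m = H.ord x - 1"
  have ord_x: "H.ord x = Suc m"
    using H.ord_ge_1[OF finite_H x] by (simp add: m_def)
  \<comment> \<open>Changing f at 1 leaves the factors f (inv (x [^] i)), 0 < i < ord x, of the orbit product
    untouched, so \<Phi> permutes the base group and \<Phi> f 1 is the 1-coordinate of (f, x) [^] ord x.\<close>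
  define \<Phi> where "\<Phi> f = f(\<one>\<^bsub>H\<^esub> := f \<one>\<^bsub>H\<^esub> \<otimes>\<^bsub>A\<^esub> inv_orbit_prod A H f x m)" for f
  have "inv\<^bsub>H\<^esub> (x [^]\<^bsub>H\<^esub> i) \<noteq> \<one>\<^bsub>H\<^esub>" if "0 < i" "i \<le> m" for i
    using that x H.pow_eq_id[OF x, of i] by (auto simp: ord_x dest: dvd_imp_le)
  then have orbit_prod_\<Phi>: "inv_orbit_prod A H (\<Phi> f) x m = inv_orbit_prod A H f x m" for f
    by (intro inv_orbit_prod_cong) (simp add: \<Phi>_def)
  have \<Phi>_closed: "\<Phi> f \<in> ?K" if "f \<in> ?K" for f
    using that inv_orbit_prod_closed[OF that x] by (auto simp: \<Phi>_def PiE_iff extensional_def)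
  have "inj_on \<Phi> ?K"
  proof (rule inj_onI)
    fix f g assume f: "f \<in> ?K" and g: "g \<in> ?K" and eq: "\<Phi> f = \<Phi> g"
    have "inv_orbit_prod A H f x m = inv_orbit_prod A H g x m"
      by (metis eq orbit_prod_\<Phi>)
    moreover have "\<Phi> f \<one>\<^bsub>H\<^esub> = \<Phi> g \<one>\<^bsub>H\<^esub>"
      by (simp add: eq)
    ultimately have "f \<one>\<^bsub>H\<^esub> \<otimes>\<^bsub>A\<^esub> inv_orbit_prod A H f x m = g \<one>\<^bsub>H\<^esub> \<otimes>\<^bsub>A\<^esub> inv_orbit_prod A H f x m"
      by (simp add: \<Phi>_def)
    then have "f \<one>\<^bsub>H\<^esub> = g \<one>\<^bsub>H\<^esub>"
      using f g inv_orbit_prod_closed[OF f x] by (auto simp: PiE_iff)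
    then show "f = g"
      using eq by (metis \<Phi>_def fun_upd_triv fun_upd_upd)
  qed
  moreover have "\<Phi> ` ?K = ?K"
    using finite_A finite_H \<Phi>_closed calculation by (intro endo_inj_surj) (auto intro: finite_PiE)
  ultimately have "bij_betw \<Phi> {f \<in> ?K. \<Phi> f \<one>\<^bsub>H\<^esub> \<in> S} {g \<in> ?K. g \<one>\<^bsub>H\<^esub> \<in> S}"
    by (auto simp: bij_betw_def intro: inj_on_subset)
  moreover have "{f \<in> ?K. wreath_pow_base A H f x (H.ord x) \<one>\<^bsub>H\<^esub> \<in> S} = {f \<in> ?K. \<Phi> f \<one>\<^bsub>H\<^esub> \<in> S}"
    using wreath_pow_base_Suc_one[OF _ x] by (auto simp: ord_x \<Phi>_def)
  ultimately show ?thesis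
    using card_PiE_value_in[OF finite_H H.one_closed S] by (simp add: bij_betw_same_card)
qed

lemma sum_wreath_ord_fibre_le:
  assumes x: "x \<in> carrier H" and exponent: "\<And>a. a \<in> carrier A \<Longrightarrow> A.ord a dvd e" and "e > 0"
  shows "(\<Sum>f\<in>carrier H \<rightarrow>\<^sub>E carrier A. real (group.ord (wreath A H) (f, x)))
    \<le> real (card (carrier H \<rightarrow>\<^sub>E carrier A)) * (real e * real (H.ord x))"
proof -
  have "group.ord (wreath A H) (f, x) \<le> H.ord x * e" if "f \<in> carrier H \<rightarrow>\<^sub>E carrier A" for f
    using wreath_ord_dvd[OF that x exponent] H.ord_ge_1[OF finite_H x] \<open>e > 0\<close>
    by (intro dvd_imp_le) auto
  then show ?thesis
    by (intro sum_bounded_above) (metis mult.commute of_nat_le_iff of_nat_mult)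
qed

lemma sum_wreath_ord_fibre_ge:
  assumes x: "x \<in> carrier H" and exponent: "\<And>a. a \<in> carrier A \<Longrightarrow> A.ord a dvd e"
  shows "ord_fraction A e * real (card (carrier H \<rightarrow>\<^sub>E carrier A)) * (real e * real (H.ord x))
    \<le> (\<Sum>f\<in>carrier H \<rightarrow>\<^sub>E carrier A. real (group.ord (wreath A H) (f, x)))"
proof -
  let ?K = "carrier H \<rightarrow>\<^sub>E carrier A"
  let ?S = "{a \<in> carrier A. A.ord a = e}"
  define good where "good = {f \<in> ?K. wreath_pow_base A H f x (H.ord x) \<one>\<^bsub>H\<^esub> \<in> ?S}"
  have ord_good: "group.ord (wreath A H) (f, x) = H.ord x * e" if "f \<in> good" for f
    using that dvd_wreath_ord[OF _ x, of f] wreath_ord_dvd[OF _ x exponent, of f]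
    by (auto simp: good_def intro: dvd_antisym)
  obtain n where n: "card (carrier H) = Suc n"
    using finite_H H.one_closed by (metis card_gt_0_iff empty_iff gr0_implies_Suc)
  have "card (carrier A) > 0"
    using finite_A A.one_closed by (auto simp: card_gt_0_iff)
  then have "ord_fraction A e * real (card ?K) = real (card ?S) * real (card (carrier A)) ^ (card (carrier H) - 1)"
    by (simp add: ord_fraction_def order_def card_PiE[OF finite_H] n)
  also have "\<dots> = real (card good)"
    unfolding good_def by (subst card_wreath_pow_base_in[OF x]) auto
  finally have "ord_fraction A e * real (card ?K) * (real e * real (H.ord x))
      = (\<Sum>f\<in>good. real (group.ord (wreath A H) (f, x)))"
    by (simp add: ord_good mult.commute)
  also have "\<dots> \<le> (\<Sum>f\<in>?K. real (group.ord (wreath A H) (f, x)))"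
    using finite_A finite_H by (intro sum_mono2) (auto simp: good_def intro: finite_PiE)
  finally show ?thesis .
qed

lemma avg_order_wreath:
  "avg_order (wreath A H) = (\<Sum>x\<in>carrier H. \<Sum>f\<in>carrier H \<rightarrow>\<^sub>E carrier A. real (group.ord (wreath A H) (f, x)))
    / (real (card (carrier H \<rightarrow>\<^sub>E carrier A)) * real (card (carrier H)))"
proof -
  have "(\<Sum>g\<in>carrier (wreath A H). real (group.ord (wreath A H) g))
      = (\<Sum>f\<in>carrier H \<rightarrow>\<^sub>E carrier A. \<Sum>x\<in>carrier H. real (group.ord (wreath A H) (f, x)))"
    by (simp add: carrier_wreath sum.cartesian_product)
  also have "\<dots> = (\<Sum>x\<in>carrier H. \<Sum>f\<in>carrier H \<rightarrow>\<^sub>E carrier A. real (group.ord (wreath A H) (f, x)))"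
    by (rule sum.swap)
  finally show ?thesis
    by (simp add: avg_order_def order_def carrier_wreath card_cartesian_product)
qed

lemma avg_order_wreath_bounds:
  assumes "e > 0" and exponent: "\<And>a. a \<in> carrier A \<Longrightarrow> A.ord a dvd e"
  shows "ord_fraction A e * real e * avg_order H \<le> avg_order (wreath A H)"
    and "avg_order (wreath A H) \<le> real e * avg_order H"
proof -
  let ?K = "carrier H \<rightarrow>\<^sub>E carrier A"
  let ?N = "real (card (carrier H))"
  have card_pos: "card (carrier A) > 0" "card (carrier H) > 0"
    using finite_A finite_H A.one_closed H.one_closed by (auto simp: card_gt_0_iff)
  then have pos: "real (card ?K) > 0"
    by (simp add: card_PiE[OF finite_H])
  have avg_H: "avg_order H = (\<Sum>x\<in>carrier H. real (H.ord x)) / ?N"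
    by (simp add: avg_order_def order_def)
  have "ord_fraction A e * real (card ?K) * real e * (\<Sum>x\<in>carrier H. real (H.ord x))
      \<le> (\<Sum>x\<in>carrier H. \<Sum>f\<in>?K. real (group.ord (wreath A H) (f, x)))"
    using sum_wreath_ord_fibre_ge[OF _ exponent]
    by (simp add: sum_distrib_left mult.assoc sum_mono)
  then show "ord_fraction A e * real e * avg_order H \<le> avg_order (wreath A H)"
    using pos card_pos by (simp add: avg_order_wreath avg_H field_simps)
  have "(\<Sum>x\<in>carrier H. \<Sum>f\<in>?K. real (group.ord (wreath A H) (f, x)))
      \<le> real (card ?K) * real e * (\<Sum>x\<in>carrier H. real (H.ord x))"
    using sum_wreath_ord_fibre_le[OF _ exponent \<open>e > 0\<close>]
    by (simp add: sum_distrib_left mult.assoc sum_mono)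
  then show "avg_order (wreath A H) \<le> real e * avg_order H"
    using pos card_pos by (simp add: avg_order_wreath avg_H field_simps)
qed

end

lemma avg_order_wreath_tendsto:
  assumes "\<And>n. group (A n)" "\<And>n. finite (carrier (A n))" "\<And>n. group (H n)" "\<And>n. finite (carrier (H n))"
    and "e > 0"
    and "\<And>n a. a \<in> carrier (A n) \<Longrightarrow> group.ord (A n) a dvd e"
    and "(\<lambda>n. ord_fraction (A n) e) \<longlonglongrightarrow> 1" and "(\<lambda>n. avg_order (H n)) \<longlonglongrightarrow> L"
  shows "(\<lambda>n. avg_order (wreath (A n) (H n))) \<longlonglongrightarrow> real e * L"
proof (rule tendsto_sandwich)
  have "finite_wreath_product (A n) (H n)" for n
    using assms(1-4) by (simp add: finite_wreath_product_def finite_wreath_product_axioms_def wreath_product_def)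
  note bounds = finite_wreath_product.avg_order_wreath_bounds[OF this assms(5,6)]
  show "\<forall>\<^sub>F n in sequentially. ord_fraction (A n) e * real e * avg_order (H n) \<le> avg_order (wreath (A n) (H n))"
    and "\<forall>\<^sub>F n in sequentially. avg_order (wreath (A n) (H n)) \<le> real e * avg_order (H n)"
    using bounds by (simp_all add: always_eventually)
  show "(\<lambda>n. ord_fraction (A n) e * real e * avg_order (H n)) \<longlonglongrightarrow> real e * L"
    using tendsto_mult[OF tendsto_mult[OF assms(7) tendsto_const] assms(8)] by simp
  show "(\<lambda>n. real e * avg_order (H n)) \<longlonglongrightarrow> real e * L"
    by (intro tendsto_mult tendsto_const assms(8))
qed

lemma order_le_order_wreath:
  assumes "group H" "finite (carrier H)"
  shows "order A \<le> order (wreath A H)"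
proof -
  have "order H > 0"
    using assms by (simp add: group.is_monoid monoid.order_gt_0_iff_finite)
  then have "order A \<le> order A ^ order H"
    by (cases "order A = 0") (simp_all add: self_le_power)
  also have "\<dots> \<le> order A ^ order H * order H"
    using \<open>order H > 0\<close> by simp
  finally show ?thesis
    using assms(2) by (simp add: order_wreath)
qed

lemma iso_ord:
  assumes "\<phi> \<in> iso G G'" "group G" "group G'" "g \<in> carrier G"
  shows "group.ord G' (\<phi> g) = group.ord G g"
proof -
  interpret G: group G by fact
  interpret G': group G' by fact
  interpret group_hom G G' \<phi>
    using assms(1) by (simp add: group_hom_def group_hom_axioms_def iso_def G.is_group G'.is_group)
  have pow_eq_1: "\<phi> g [^]\<^bsub>G'\<^esub> k = \<one>\<^bsub>G'\<^esub> \<longleftrightarrow> g [^]\<^bsub>G\<^esub> k = \<one>\<^bsub>G\<^esub>" for k :: nat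
  proof -
    have "inj_on \<phi> (carrier G)"
      using assms(1) by (simp add: iso_def bij_betw_def)
    then have "\<phi> (g [^]\<^bsub>G\<^esub> k) = \<one>\<^bsub>G'\<^esub> \<longleftrightarrow> g [^]\<^bsub>G\<^esub> k = \<one>\<^bsub>G\<^esub>"
      using assms(4) by (metis G.nat_pow_closed G.one_closed hom_one inj_onD)
    then show ?thesis
      using assms(4) by (simp add: hom_nat_pow)
  qed
  have "group.ord G' (\<phi> g) dvd group.ord G g"
    using assms(4) pow_eq_1 G'.pow_eq_id by simp
  moreover have "group.ord G g dvd group.ord G' (\<phi> g)"
    using assms(4) pow_eq_1[of "group.ord G' (\<phi> g)"] G.pow_eq_id by simp
  ultimately show ?thesis
    by (rule dvd_antisym)
qed

lemma ord_image_iso: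
  assumes "\<phi> \<in> iso G G'" "group G" "group G'"
  shows "group.ord G' ` carrier G' = group.ord G ` carrier G"
proof -
  have "carrier G' = \<phi> ` carrier G"
    using assms(1) by (simp add: iso_def bij_betw_def)
  then show ?thesis
    using iso_ord[OF assms] by (simp add: image_image cong: image_cong)
qed

lemma avg_order_iso:
  assumes "\<phi> \<in> iso G G'" "group G" "group G'"
  shows "avg_order G' = avg_order G"
proof -
  have bij: "bij_betw \<phi> (carrier G) (carrier G')"
    using assms(1) by (simp add: iso_def)
  have "(\<Sum>a\<in>carrier G'. real (group.ord G' a)) = (\<Sum>g\<in>carrier G. real (group.ord G' (\<phi> g)))"
    by (rule sum.reindex_bij_betw[OF bij, symmetric])
  also have "\<dots> = (\<Sum>g\<in>carrier G. real (group.ord G g))"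
    using iso_ord[OF assms] by simp
  finally show ?thesis
    using iso_same_order[OF assms(1)] by (simp add: avg_order_def)
qed

lemma ord_fraction_iso:
  assumes "\<phi> \<in> iso G G'" "group G" "group G'"
  shows "ord_fraction G' e = ord_fraction G e"
proof -
  have inj: "inj_on \<phi> (carrier G)" and car: "carrier G' = \<phi> ` carrier G"
    using assms(1) by (simp_all add: iso_def bij_betw_def)
  have "{a \<in> carrier G'. group.ord G' a = e} = \<phi> ` {g \<in> carrier G. group.ord G g = e}"
    unfolding car using iso_ord[OF assms] by auto
  then have "card {a \<in> carrier G'. group.ord G' a = e} = card {g \<in> carrier G. group.ord G g = e}"
    using inj by (simp add: card_image inj_on_subset)
  then show ?thesis
    using iso_same_order[OF assms(1)] by (simp add: ord_fraction_def)
qed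

text \<open>The theorem asks for groups of type nat monoid; to_nat_on moves a finite group there.\<close>

definition nat_copy :: "('a, 'b) monoid_scheme \<Rightarrow> nat monoid" where
  "nat_copy G = image_group (to_nat_on (carrier G)) G"

lemma nat_copy_iso: "finite (carrier G) \<Longrightarrow> to_nat_on (carrier G) \<in> iso G (nat_copy G)"
  unfolding nat_copy_def by (intro inj_imp_image_group_iso inj_on_to_nat_on countable_finite)

lemma group_nat_copy: "group G \<Longrightarrow> finite (carrier G) \<Longrightarrow> group (nat_copy G)"
  unfolding nat_copy_def by (intro group.inj_imp_image_group_is_group inj_on_to_nat_on countable_finite)

lemma finite_carrier_nat_copy: "finite (carrier G) \<Longrightarrow> finite (carrier (nat_copy G))"
  by (simp add: nat_copy_def image_group_carrier)

lemma order_nat_copy: "finite (carrier G) \<Longrightarrow> order (nat_copy G) = order G"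
  by (metis iso_same_order nat_copy_iso)

lemma avg_order_nat_copy: "group G \<Longrightarrow> finite (carrier G) \<Longrightarrow> avg_order (nat_copy G) = avg_order G"
  by (metis avg_order_iso group_nat_copy nat_copy_iso)

section \<open>Homocyclic groups\<close>

lemma pow_product_group:
  "f [^]\<^bsub>product_group I G\<^esub> (k::nat) = (\<lambda>i\<in>I. f i [^]\<^bsub>G i\<^esub> k)"
  by (induction k) (auto intro!: restrict_ext)

definition homocyclic_group :: "nat \<Rightarrow> nat \<Rightarrow> (nat \<Rightarrow> int) monoid" where
  "homocyclic_group q n = product_group {..<n} (\<lambda>_. integer_mod_group q)"

lemma group_homocyclic_group: "group (homocyclic_group q n)"
  by (simp add: homocyclic_group_def)

lemma carrier_homocyclic_group:
  "q > 0 \<Longrightarrow> carrier (homocyclic_group q n) = {..<n} \<rightarrow>\<^sub>E {0..<int q}"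
  by (simp add: homocyclic_group_def carrier_integer_mod_group)

lemma finite_carrier_homocyclic_group: "q > 0 \<Longrightarrow> finite (carrier (homocyclic_group q n))"
  by (simp add: carrier_homocyclic_group finite_PiE)

lemma order_homocyclic_group: "q > 0 \<Longrightarrow> order (homocyclic_group q n) = q ^ n"
  by (simp add: order_def carrier_homocyclic_group card_PiE)

lemma homocyclic_group_ord_dvd:
  assumes "q > 0" "a \<in> carrier (homocyclic_group q n)"
  shows "group.ord (homocyclic_group q n) a dvd q"
proof -
  have "a [^]\<^bsub>homocyclic_group q n\<^esub> q = \<one>\<^bsub>homocyclic_group q n\<^esub>"
    by (simp add: homocyclic_group_def pow_product_group)
  then show ?thesis
    using assms group.pow_eq_id[OF group_homocyclic_group] by blast
qed

lemma homocyclic_group_ord_eq: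
  assumes "q > 0" "a \<in> carrier (homocyclic_group q n)" "i < n" "a i = 1"
  shows "group.ord (homocyclic_group q n) a = q"
proof -
  let ?Z = "homocyclic_group q n"
  have "a [^]\<^bsub>?Z\<^esub> group.ord ?Z a = \<one>\<^bsub>?Z\<^esub>"
    using assms(2) group.pow_ord_eq_1[OF group_homocyclic_group] by blast
  then have "int (group.ord ?Z a) mod int q = 0"
    using assms(3,4) by (auto simp: homocyclic_group_def pow_product_group dest!: fun_cong[of _ _ i])
  then have "q dvd group.ord ?Z a"
    by (simp add: mod_eq_0_iff_dvd flip: of_nat_mod)
  then show ?thesis
    using homocyclic_group_ord_dvd[OF assms(1,2)] by (simp add: dvd_antisym)
qed

lemma ord_fraction_homocyclic_group_ge:
  assumes "q \<ge> 2"
  shows "1 - ((real q - 1) / real q) ^ n \<le> ord_fraction (homocyclic_group q n) q"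
proof -
  let ?Z = "homocyclic_group q n"
  let ?S = "{a \<in> carrier ?Z. \<exists>i<n. a i = 1}"
  have q0: "q > 0"
    using assms by simp
  have "carrier ?Z - ?S = {..<n} \<rightarrow>\<^sub>E ({0..<int q} - {1})"
    unfolding carrier_homocyclic_group[OF q0] PiE_def Pi_def by auto
  then have "card (carrier ?Z - ?S) = (q - 1) ^ n"
    using assms by (simp add: card_PiE)
  moreover have "finite (carrier ?Z)" "?S \<subseteq> carrier ?Z"
    by (auto simp: carrier_homocyclic_group[OF q0] finite_PiE)
  ultimately have "card ?S = q ^ n - (q - 1) ^ n"
    using card_Diff_subset[of ?S "carrier ?Z"] card_mono[of "carrier ?Z" ?S] order_homocyclic_group[OF q0]
    by (simp add: order_def finite_subset)
  moreover have "(q - 1) ^ n \<le> q ^ n"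
    by (intro power_mono) auto
  ultimately have "1 - ((real q - 1) / real q) ^ n = real (card ?S) / real (order ?Z)"
    using assms by (simp add: order_homocyclic_group of_nat_diff power_divide field_simps)
  also have "\<dots> \<le> ord_fraction ?Z q"
  proof -
    have "?S \<subseteq> {a \<in> carrier ?Z. group.ord ?Z a = q}"
      using assms homocyclic_group_ord_eq[of q _ n] by auto
    then have "card ?S \<le> card {a \<in> carrier ?Z. group.ord ?Z a = q}"
      using assms by (intro card_mono) (auto simp: carrier_homocyclic_group finite_PiE)
    then show ?thesis
      by (simp add: ord_fraction_def divide_right_mono)
  qed
  finally show ?thesis .
qed

lemma ord_fraction_homocyclic_group_tendsto:
  assumes "q \<ge> 2"
  shows "(\<lambda>n. ord_fraction (homocyclic_group q n) q) \<longlonglongrightarrow> 1"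
proof (rule tendsto_sandwich)
  have "(\<lambda>n. ((real q - 1) / real q) ^ n) \<longlonglongrightarrow> 0"
    using assms by (intro LIMSEQ_power_zero) simp
  then have "(\<lambda>n. 1 - ((real q - 1) / real q) ^ n) \<longlonglongrightarrow> 1 - 0"
    by (intro tendsto_diff tendsto_const)
  then show "(\<lambda>n. 1 - ((real q - 1) / real q) ^ n) \<longlonglongrightarrow> 1"
    by simp
  show "\<forall>\<^sub>F n in sequentially. 1 - ((real q - 1) / real q) ^ n \<le> ord_fraction (homocyclic_group q n) q"
    using ord_fraction_homocyclic_group_ge[OF assms] by simp
  show "\<forall>\<^sub>F n in sequentially. ord_fraction (homocyclic_group q n) q \<le> 1"
    by (simp add: ord_fraction_le_1)
qed simp

lemma filterlim_order_homocyclic_group: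
  "q \<ge> 2 \<Longrightarrow> filterlim (\<lambda>n. order (homocyclic_group q n)) at_top sequentially"
  by (rule filterlim_at_top_mono[OF filterlim_ident])
    (simp add: order_homocyclic_group self_le_ge2_pow always_eventually)

lemma avg_order_wreath_homocyclic_tendsto:
  assumes "q \<ge> 2" "\<And>n. group (H n)" "\<And>n. finite (carrier (H n))"
    and "(\<lambda>n. avg_order (H n)) \<longlonglongrightarrow> L"
  shows "(\<lambda>n. avg_order (wreath (nat_copy (homocyclic_group q n)) (H n))) \<longlonglongrightarrow> real q * L"
proof (rule avg_order_wreath_tendsto)
  have finite_Z: "finite (carrier (homocyclic_group q n))" for n
    using assms(1) by (simp add: finite_carrier_homocyclic_group)
  note iso = nat_copy_iso[OF finite_Z] and groups = group_homocyclic_group group_nat_copy[OF group_homocyclic_group finite_Z]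
  show "group (nat_copy (homocyclic_group q n))" "finite (carrier (nat_copy (homocyclic_group q n)))" for n
    by (simp_all add: groups finite_carrier_nat_copy[OF finite_Z])
  show "group.ord (nat_copy (homocyclic_group q n)) a dvd q"
    if "a \<in> carrier (nat_copy (homocyclic_group q n))" for n a
  proof -
    have "group.ord (nat_copy (homocyclic_group q n)) a \<in> group.ord (homocyclic_group q n) ` carrier (homocyclic_group q n)"
      using that ord_image_iso[OF iso groups] by blast
    then show ?thesis
      using homocyclic_group_ord_dvd[of q] assms(1) by auto
  qed
  show "(\<lambda>n. ord_fraction (nat_copy (homocyclic_group q n)) q) \<longlonglongrightarrow> 1"
    using ord_fraction_homocyclic_group_tendsto[OF assms(1)] by (simp add: ord_fraction_iso[OF iso groups])
qed (use assms in auto)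

section \<open>Finite p-groups\<close>

lemma finite_p_groupD:
  "finite_p_group p G \<Longrightarrow> group G" "finite_p_group p G \<Longrightarrow> finite (carrier G)"
  by (simp_all add: finite_p_group_def)

lemma finite_p_group_nat_copy: "finite_p_group p G \<Longrightarrow> finite_p_group p (nat_copy G)"
  by (simp add: finite_p_group_def group_nat_copy finite_carrier_nat_copy order_nat_copy)

lemma finite_p_group_wreath:
  assumes "finite_p_group p A" "finite_p_group p H"
  shows "finite_p_group p (wreath A H)"
proof -
  obtain a h where "group A" "finite (carrier A)" "order A = p ^ a"
    "group H" "finite (carrier H)" "order H = p ^ h"
    using assms by (auto simp: finite_p_group_def)
  moreover have "(p ^ a) ^ p ^ h * p ^ h = p ^ (a * p ^ h + h)"
    by (simp add: power_add power_mult)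
  ultimately show ?thesis
    unfolding finite_p_group_def
    by (auto simp: wreath_product.group_wreath wreath_product_def order_wreath carrier_wreath
        finite_PiE)
qed

lemma finite_p_group_homocyclic_group:
  "p > 0 \<Longrightarrow> finite_p_group p (homocyclic_group (p ^ s) n)"
  by (auto simp: finite_p_group_def group_homocyclic_group order_homocyclic_group
      carrier_homocyclic_group finite_PiE simp flip: power_mult)

theorem corollary7p1:
  fixes p r :: nat and B :: "('b, 'c) monoid_scheme"
  assumes "Factorial_Ring.prime p" and "finite_p_group p B" and "order B > 1" and "r \<ge> 2"
  shows "\<exists>(G :: nat \<Rightarrow> nat monoid) (H :: nat \<Rightarrow> nat monoid).
           (\<forall>n. finite_p_group p (G n) \<and> finite_p_group p (H n)) \<and>
           filterlim (\<lambda>n. order (G n)) at_top sequentially \<and>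
           filterlim (\<lambda>n. order (H n)) at_top sequentially \<and>
           (\<lambda>n. avg_order (wreath (G n) (H n))) \<longlonglongrightarrow> real p ^ r * avg_order B"
proof -
  have p: "p \<ge> 2"
    using assms(1) by (simp add: prime_ge_2_nat)
  define q where "q = p ^ (r - 1)"
  have q: "q \<ge> 2"
    using p assms(4) self_le_power[of p "r - 1"] by (simp add: q_def)
  define C where "C m n = nat_copy (homocyclic_group m n)" for m n
  define H where "H n = nat_copy (wreath (C q n) B)" for n
  have fp_C: "finite_p_group p (C p n)" "finite_p_group p (C q n)" for n
    using p finite_p_group_homocyclic_group[of p 1 n] finite_p_group_homocyclic_group[of p "r - 1" n]
    by (simp_all add: C_def q_def finite_p_group_nat_copy)
  have fp_W: "finite_p_group p (wreath (C q n) B)" for n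
    by (rule finite_p_group_wreath[OF fp_C(2) assms(2)])
  then have fp_H: "finite_p_group p (H n)" for n
    by (simp add: H_def finite_p_group_nat_copy)
  have "(\<lambda>n. avg_order (wreath (C q n) B)) \<longlonglongrightarrow> real q * avg_order B"
    unfolding C_def by (rule avg_order_wreath_homocyclic_tendsto[OF q finite_p_groupD[OF assms(2)] tendsto_const])
  then have "(\<lambda>n. avg_order (H n)) \<longlonglongrightarrow> real q * avg_order B"
    using finite_p_groupD[OF fp_W] by (simp add: H_def avg_order_nat_copy)
  then have "(\<lambda>n. avg_order (wreath (C p n) (H n))) \<longlonglongrightarrow> real p * (real q * avg_order B)"
    unfolding C_def by (rule avg_order_wreath_homocyclic_tendsto[OF p finite_p_groupD[OF fp_H]])
  moreover have "real p * (real q * avg_order B) = real p ^ r * avg_order B"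
    using assms(4) by (simp add: q_def mult.assoc flip: power_Suc)
  moreover have order_C: "filterlim (\<lambda>n. order (C m n)) at_top sequentially" if "m \<ge> 2" for m
    using filterlim_order_homocyclic_group[OF that] that
    by (simp add: C_def order_nat_copy finite_carrier_homocyclic_group)
  moreover have "filterlim (\<lambda>n. order (H n)) at_top sequentially"
  proof (rule filterlim_at_top_mono[OF order_C[OF q]])
    show "\<forall>\<^sub>F n in sequentially. order (C q n) \<le> order (H n)"
      using order_le_order_wreath[OF finite_p_groupD[OF assms(2)]] finite_p_groupD[OF fp_W]
      by (intro always_eventually allI) (simp add: H_def order_nat_copy)
  qed
  ultimately show ?thesis
    using fp_C(1) fp_H order_C[OF p] by (intro exI[of _ "C p"] exI[of _ H]) simp
qed

end
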